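(* Let $\mathcal{S}=(\sigma_{ij})\in\mathrm{SL}(2,\mathbb{Z})$ with $\mathrm{tr}(\mathcal{S})>2$, let $\lambda>1$ be its eigenvalue greater than $1$, and let $P$ be a real matrix with $\det P=1$ and $P\mathcal{S}P^{-1}=\mathrm{diag}(1/\lambda,\lambda)$. Let $A=\begin{pmatrix}1&0\\0&-1\end{pmatrix}$ and let $\mathbb{Z}_\Phi=\langle \mathbf{t}_3\rangle\times\langle\bar\alpha\rangle\cong\mathbb{Z}\times\mathbb{Z}_2$. Then there is no homomorphism $\varphi:\mathbb{Z}_\Phi\to\mathrm{GL}(2,\mathbb{Z})$ with $\varphi(\mathbf{t}_3)=\mathcal{S}$ and $\varphi(\bar\alpha)=P^{-1}AP$.
   Context: Here $\mathbb{Z}_\Phi$ is the extension of $\mathbb{Z}=\langle\mathbf{t}_3\rangle$ by $\Phi=\langle A\rangle\cong\mathbb{Z}_2$ with $\bar\alpha=(\mathbf{t}_3^0,A)$ commuting with $\mathbf{t}_3$ (since $A$ is diagonal it acts trivially on the $\mathbb{R}$-factor of $\mathrm{Sol}^3$). *)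

theory Defs
  imports "HOL-Analysis.Analysis" "HOL-Algebra.Elementary_Groups"
begin

type_synonym mat2 = "real^2^2"

definition int_matrix :: "mat2 \<Rightarrow> bool" where
  "int_matrix M \<longleftrightarrow> (\<forall>i j. M $ i $ j \<in> \<int>)"

definition SL2Z :: "mat2 set" where
  "SL2Z = {M. int_matrix M \<and> det M = 1}"

definition GL2Z_set :: "mat2 set" where
  "GL2Z_set = {M. int_matrix M \<and> (det M = 1 \<or> det M = -1)}"

definition GL2Z :: "mat2 monoid" where
  "GL2Z = \<lparr>carrier = GL2Z_set, mult = (\<lambda>M N. M ** N), one = mat 1\<rparr>"

definition diag2 :: "real \<Rightarrow> real \<Rightarrow> mat2" where
  "diag2 a b = (\<chi> i j. if i = j then (if i = 1 then a else b) else 0)"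

text \<open>The group Z_Phi = <t3> x <alpha-bar>, Z x Z_2; t3 = (1,0), alpha-bar = (0,1).\<close>
definition ZPhi :: "(int \<times> int) monoid" where
  "ZPhi = DirProd integer_group (integer_mod_group 2)"

end

theory Submission
  imports Defs
begin

text \<open>
  The images of the commuting generators of \<open>\<int> \<times> \<int>\<^sub>2\<close> would give an integral involution \<open>B\<close>
  of determinant \<open>-1\<close> commuting with \<open>S\<close>. Such a \<open>B\<close> has the form \<open>[[p, q], [r, -p]]\<close> with
  \<open>p\<^sup>2 + q r = 1\<close>, and the commutation relations force \<open>(tr S)\<^sup>2 - 4\<close> times \<open>q\<^sup>2\<close> (and times \<open>r\<^sup>2\<close>)
  to be a square; so the discriminant \<open>(tr S)\<^sup>2 - 4\<close> of the hyperbolic matrix \<open>S\<close> is a perfect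
  square. This is impossible since \<open>(t - 1)\<^sup>2 < t\<^sup>2 - 4 < t\<^sup>2\<close> for every integer \<open>t \<ge> 3\<close>.
\<close>

lemma square_minus_four_not_square:
  fixes t n :: int
  assumes "t \<ge> 3"
  shows "t\<^sup>2 - 4 \<noteq> n\<^sup>2"
proof
  assume eq: "t\<^sup>2 - 4 = n\<^sup>2"
  show False
  proof (cases "\<bar>n\<bar> < t")
    case True
    then have "\<bar>n\<bar>\<^sup>2 \<le> (t - 1)\<^sup>2"
      by (intro power_mono) auto
    then show False using eq assms by (simp add: power2_eq_square algebra_simps)
  next
    case False
    then have "t\<^sup>2 \<le> \<bar>n\<bar>\<^sup>2"
      using assms by (intro power_mono) auto
    then show False using eq by simp
  qed
qed

lemma square_if_mult_square_eq_square:
  fixes d k m :: int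
  assumes "k \<noteq> 0" and "d * k\<^sup>2 = m\<^sup>2"
  shows "\<exists>j. d = j\<^sup>2"
proof -
  have "k\<^sup>2 dvd m\<^sup>2" using assms(2) by (metis dvd_triv_right)
  then obtain j where "m = k * j" by (auto elim: dvdE)
  with assms have "d * k\<^sup>2 = j\<^sup>2 * k\<^sup>2" by (simp add: power_mult_distrib)
  with assms(1) show ?thesis by auto
qed

lemma discriminant_square_if_commutes_with_reflection:
  fixes a b c d p q r :: int
  assumes involution: "p\<^sup>2 + q * r = 1"
    and comm_off: "b * r = q * c"
    and comm_12: "q * (a - d) = 2 * p * b"
    and comm_21: "r * (a - d) = 2 * p * c"
  shows "\<exists>n. (a + d)\<^sup>2 - 4 * (a * d - b * c) = n\<^sup>2"
proof -
  let ?disc = "(a + d)\<^sup>2 - 4 * (a * d - b * c)"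
  have disc_eq: "?disc = (a - d)\<^sup>2 + 4 * b * c" by algebra
  consider "q \<noteq> 0" | "r \<noteq> 0" | "q = 0" "r = 0" by blast
  then show ?thesis
  proof cases
    case 1
    have "?disc * q\<^sup>2 = (q * (a - d))\<^sup>2 + 4 * b * q * (q * c)"
      unfolding disc_eq by algebra
    also have "\<dots> = (2 * b)\<^sup>2 * (p\<^sup>2 + q * r)"
      unfolding comm_12 comm_off [symmetric] by algebra
    finally have "?disc * q\<^sup>2 = (2 * b)\<^sup>2" by (simp only: involution mult_1_right)
    with 1 show ?thesis by (rule square_if_mult_square_eq_square)
  next
    case 2
    have "?disc * r\<^sup>2 = (r * (a - d))\<^sup>2 + 4 * c * r * (b * r)"
      unfolding disc_eq by algebra
    also have "\<dots> = (2 * c)\<^sup>2 * (p\<^sup>2 + q * r)"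
      unfolding comm_21 comm_off by algebra
    finally have "?disc * r\<^sup>2 = (2 * c)\<^sup>2" by (simp only: involution mult_1_right)
    with 2 show ?thesis by (rule square_if_mult_square_eq_square)
  next
    case 3
    then have "p \<noteq> 0" using involution by auto
    with 3 comm_12 comm_21 have "b = 0" "c = 0" by auto
    then show ?thesis using disc_eq by auto
  qed
qed

lemma int_matrix_entries:
  assumes "int_matrix M"
  obtains a b c d :: int
  where "M $ 1 $ 1 = of_int a" "M $ 1 $ 2 = of_int b" "M $ 2 $ 1 = of_int c" "M $ 2 $ 2 = of_int d"
  using assms unfolding int_matrix_def by (meson Ints_cases)

lemma trace_int_matrix: "int_matrix M \<Longrightarrow> trace M \<in> \<int>"
  by (simp add: int_matrix_def trace_def sum_2)

lemma discriminant_square_if_commutes_with_int_involution: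
  fixes S B :: mat2
  assumes "int_matrix S" "int_matrix B"
    and involution: "B ** B = mat 1" and det_B: "det B = -1"
    and comm: "S ** B = B ** S"
  shows "\<exists>n::int. (trace S)\<^sup>2 - 4 * det S = of_int (n\<^sup>2)"
proof -
  obtain a b c d where S: "S$1$1 = of_int a" "S$1$2 = of_int b" "S$2$1 = of_int c" "S$2$2 = of_int d"
    using assms(1) by (rule int_matrix_entries)
  obtain p q r u where B: "B$1$1 = of_int p" "B$1$2 = of_int q" "B$2$1 = of_int r" "B$2$2 = of_int u"
    using assms(2) by (rule int_matrix_entries)
  have sq: "p * p + q * r = 1" "p * q + q * u = 0" "r * p + u * r = 0" "r * q + u * u = 1"
    using involution unfolding vec_eq_iff forall_2
    by (simp_all add: matrix_matrix_mult_def sum_2 mat_def B flip: of_int_mult of_int_add)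
  have "p * u - q * r = -1"
    using det_B by (simp add: det_2 B flip: of_int_mult of_int_diff)
  with sq have "(p + u) * (p + u) = 0" by algebra
  then have u: "u = - p" by simp
  have cm: "a*p + b*r = p*a + q*c" "a*q + b*u = p*b + q*d" "c*p + d*r = r*a + u*c"
    using comm unfolding vec_eq_iff forall_2
    by (simp_all add: matrix_matrix_mult_def sum_2 S B flip: of_int_mult of_int_add)
  have "p\<^sup>2 + q * r = 1" using sq by (simp add: power2_eq_square)
  moreover have "b * r = q * c" "q * (a - d) = 2 * p * b" "r * (a - d) = 2 * p * c"
    using cm u by algebra+
  ultimately obtain n where "(a + d)\<^sup>2 - 4 * (a * d - b * c) = n\<^sup>2"
    using discriminant_square_if_commutes_with_reflection by blast
  moreover have "(trace S)\<^sup>2 - 4 * det S = of_int ((a + d)\<^sup>2 - 4 * (a * d - b * c))"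
    by (simp add: trace_def sum_2 det_2 S)
  ultimately show ?thesis by auto
qed

lemma
  fixes P :: "'a::semiring_1^'n^'n"
  assumes "invertible P"
  shows matrix_inv_left: "matrix_inv P ** P = mat 1"
    and matrix_inv_right: "P ** matrix_inv P = mat 1"
  using someI_ex [OF assms [unfolded invertible_def]] by (simp_all add: matrix_inv_def)

lemma det_similar:
  fixes P M :: "'a::comm_ring_1^'n^'n"
  assumes "invertible P"
  shows "det (matrix_inv P ** M ** P) = det M"
proof -
  have "det (matrix_inv P ** M ** P) = det M * (det (matrix_inv P) * det P)"
    by (simp add: det_mul ac_simps)
  also have "det (matrix_inv P) * det P = 1"
    using matrix_inv_left [OF assms] by (metis det_I det_mul)
  finally show ?thesis by simp
qed

lemma involution_similar:
  fixes P M :: "'a::semiring_1^'n^'n"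
  assumes "invertible P" and "M ** M = mat 1"
  shows "(matrix_inv P ** M ** P) ** (matrix_inv P ** M ** P) = mat 1"
proof -
  have "(matrix_inv P ** M ** P) ** (matrix_inv P ** M ** P)
      = matrix_inv P ** M ** (P ** matrix_inv P) ** M ** P"
    by (simp add: matrix_mul_assoc)
  also have "\<dots> = matrix_inv P ** (M ** M) ** P"
    by (simp add: matrix_inv_right [OF assms(1)] matrix_mul_assoc)
  also have "\<dots> = matrix_inv P ** P"
    using assms(2) by simp
  finally show ?thesis using matrix_inv_left [OF assms(1)] by simp
qed

lemma hom_mult_commute:
  assumes "h \<in> hom G H" "x \<in> carrier G" "y \<in> carrier G" "x \<otimes>\<^bsub>G\<^esub> y = y \<otimes>\<^bsub>G\<^esub> x"
  shows "h x \<otimes>\<^bsub>H\<^esub> h y = h y \<otimes>\<^bsub>H\<^esub> h x"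
  using assms by (metis hom_mult)

lemma ZPhi_generators_commute:
  "(1, 0) \<in> carrier ZPhi" "(0, 1) \<in> carrier ZPhi"
  "(1, 0) \<otimes>\<^bsub>ZPhi\<^esub> (0, 1) = (0, 1) \<otimes>\<^bsub>ZPhi\<^esub> (1, 0)"
  by (simp_all add: ZPhi_def DirProd_def integer_group_def carrier_integer_mod_group)

theorem lemma3p4:
  fixes S P :: mat2 and lambda :: real
  assumes "S \<in> SL2Z"
    and "trace S > 2"
    and "lambda > 1"
    and "det P = 1"
    and "P ** S ** matrix_inv P = diag2 (1 / lambda) lambda"
  shows "\<not> (\<exists>\<phi>. \<phi> \<in> hom ZPhi GL2Z \<and> \<phi> (1, 0) = S
              \<and> \<phi> (0, 1) = matrix_inv P ** diag2 1 (-1) ** P)"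
proof
  assume "\<exists>\<phi>. \<phi> \<in> hom ZPhi GL2Z \<and> \<phi> (1, 0) = S
              \<and> \<phi> (0, 1) = matrix_inv P ** diag2 1 (-1) ** P"
  then obtain \<phi> where hom: "\<phi> \<in> hom ZPhi GL2Z" and S: "\<phi> (1, 0) = S"
    and B: "\<phi> (0, 1) = matrix_inv P ** diag2 1 (-1) ** P" by blast
  let ?B = "matrix_inv P ** diag2 1 (-1) ** P"
  have P: "invertible P" using assms(4) by (simp add: invertible_det_nz)
  have "diag2 1 (-1) ** diag2 1 (-1) = (mat 1 :: mat2)"
    by (simp add: diag2_def matrix_matrix_mult_def vec_eq_iff forall_2 sum_2 mat_def)
  with P have involution: "?B ** ?B = mat 1" by (rule involution_similar)
  have "det (diag2 1 (-1)) = -1" by (simp add: diag2_def det_2)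
  with P have det_B: "det ?B = -1" by (simp only: det_similar)
  have "\<phi> (0, 1) \<in> GL2Z_set" using hom ZPhi_generators_commute(2) by (auto simp: hom_def GL2Z_def)
  then have int_B: "int_matrix ?B" using B by (simp add: GL2Z_set_def)
  have "\<phi> (1, 0) \<otimes>\<^bsub>GL2Z\<^esub> \<phi> (0, 1) = \<phi> (0, 1) \<otimes>\<^bsub>GL2Z\<^esub> \<phi> (1, 0)"
    using hom ZPhi_generators_commute by (rule hom_mult_commute)
  then have comm: "S ** ?B = ?B ** S"
    unfolding S B GL2Z_def by (simp only: monoid.select_convs)
  have int_S: "int_matrix S" and det_S: "det S = 1" using assms(1) by (auto simp: SL2Z_def)
  obtain n :: int where disc: "(trace S)\<^sup>2 - 4 = of_int (n\<^sup>2)"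
    using discriminant_square_if_commutes_with_int_involution [OF int_S int_B involution det_B comm]
      det_S by auto
  obtain t :: int where t: "trace S = of_int t" using trace_int_matrix [OF int_S] by (auto elim: Ints_cases)
  with disc have "real_of_int (t\<^sup>2 - 4) = real_of_int (n\<^sup>2)" by simp
  then have "t\<^sup>2 - 4 = n\<^sup>2" by (simp only: of_int_eq_iff)
  moreover have "t \<ge> 3" using assms(2) t by simp
  ultimately show False using square_minus_four_not_square by blast
qed

end
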